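(* Let $(\mathcal{G},c)$ be a colored directed acyclic graph with compatible coloring, and assume that $c(i)=c(j)$ implies $(\mathcal{G}_i,c)\cong(\mathcal{G}_j,c)$ for all vertices $i,j$. Then there is no directed edge $j\to i$ with $c(i)=c(j)$.
   Context: $\mathcal{G}=(V,\vec E)$ is a finite DAG; $j\to i$ means $(j,i)\in\vec E$. A coloring is $c:V\cup\vec E\to[r+R]$; compatible means $c(V)\cap c(\vec E)=\emptyset$ and $c(j\to i)=c(l\to k)$ implies $c(i)=c(k)$. $\mathrm{ch}(i)=\{k:i\to k\}$; $(\mathcal{G}_i,c)$ is the colored graph on $\{i\}\cup\mathrm{ch}(i)$ with edges $i\to k$, $k\in\mathrm{ch}(i)$, and colors inherited from $c$; $\cong$ is isomorphism of colored graphs. *)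

theory Defs
  imports Main
begin

text \<open>A colored DAG: vertex set V, edge set E (pairs (j,i) meaning j -> i),
  vertex coloring cv and edge coloring ce, colors in [r+R] = {1..r+R}.\<close>

definition is_dag :: "'v set \<Rightarrow> ('v \<times> 'v) set \<Rightarrow> bool" where
  "is_dag V E \<longleftrightarrow> finite V \<and> E \<subseteq> V \<times> V \<and> acyclic E"

definition coloring :: "nat \<Rightarrow> 'v set \<Rightarrow> ('v \<times> 'v) set \<Rightarrow> ('v \<Rightarrow> nat) \<Rightarrow> ('v \<times> 'v \<Rightarrow> nat) \<Rightarrow> bool" where
  "coloring n V E cv ce \<longleftrightarrow> cv ` V \<subseteq> {1..n} \<and> ce ` E \<subseteq> {1..n}"

definition compatible :: "'v set \<Rightarrow> ('v \<times> 'v) set \<Rightarrow> ('v \<Rightarrow> nat) \<Rightarrow> ('v \<times> 'v \<Rightarrow> nat) \<Rightarrow> bool" where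
  "compatible V E cv ce \<longleftrightarrow> cv ` V \<inter> ce ` E = {} \<and>
     (\<forall>j i l k. (j, i) \<in> E \<longrightarrow> (l, k) \<in> E \<longrightarrow> ce (j, i) = ce (l, k) \<longrightarrow> cv i = cv k)"

definition children :: "('v \<times> 'v) set \<Rightarrow> 'v \<Rightarrow> 'v set" where
  "children E i = {k. (i, k) \<in> E}"

definition local_vertices :: "('v \<times> 'v) set \<Rightarrow> 'v \<Rightarrow> 'v set" where
  "local_vertices E i = {i} \<union> children E i"

definition local_edges :: "('v \<times> 'v) set \<Rightarrow> 'v \<Rightarrow> ('v \<times> 'v) set" where
  "local_edges E i = {(i, k) | k. k \<in> children E i}"

definition colored_iso ::
  "'v set \<Rightarrow> ('v \<times> 'v) set \<Rightarrow> 'v set \<Rightarrow> ('v \<times> 'v) set \<Rightarrow> ('v \<Rightarrow> nat) \<Rightarrow> ('v \<times> 'v \<Rightarrow> nat) \<Rightarrow> bool" where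
  "colored_iso V1 E1 V2 E2 cv ce \<longleftrightarrow>
     (\<exists>f. bij_betw f V1 V2 \<and>
          (\<forall>a\<in>V1. \<forall>b\<in>V1. (a, b) \<in> E1 \<longleftrightarrow> (f a, f b) \<in> E2) \<and>
          (\<forall>a\<in>V1. cv (f a) = cv a) \<and>
          (\<forall>a b. (a, b) \<in> E1 \<longrightarrow> ce (f a, f b) = ce (a, b)))"

definition local_iso :: "('v \<times> 'v) set \<Rightarrow> ('v \<Rightarrow> nat) \<Rightarrow> ('v \<times> 'v \<Rightarrow> nat) \<Rightarrow> 'v \<Rightarrow> 'v \<Rightarrow> bool" where
  "local_iso E cv ce i j \<longleftrightarrow>
     colored_iso (local_vertices E i) (local_edges E i) (local_vertices E j) (local_edges E j) cv ce"

end

theory Submission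
  imports Defs
begin

text \<open>An edge \<open>j \<rightarrow> i\<close> with \<open>c(i) = c(j)\<close> can be transported by an isomorphism
  \<open>\<G>\<^sub>j \<cong> \<G>\<^sub>i\<close>: it maps \<open>j\<close> to \<open>i\<close> and \<open>i\<close> to a child \<open>k\<close> of \<open>i\<close> with
  \<open>c(i \<rightarrow> k) = c(j \<rightarrow> i)\<close>, so compatibility forces \<open>c(k) = c(i)\<close>. Thus every
  monochromatic edge is followed by another one, which a finite DAG cannot sustain.\<close>

lemma finite_acyclic_successor_closed_empty:
  assumes "finite E" and "acyclic E"
    and closed: "\<And>x. x \<in> S \<Longrightarrow> \<exists>y\<in>S. (x, y) \<in> E"
  shows "S = {}"
proof (rule ccontr)
  assume "S \<noteq> {}"
  have "wf (E\<inverse>)"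
    using assms(1,2) by (simp add: finite_acyclic_wf acyclic_converse)
  then obtain m where "m \<in> S" and "\<And>y. (y, m) \<in> E\<inverse> \<Longrightarrow> y \<notin> S"
    using \<open>S \<noteq> {}\<close> wfE_min by (metis ex_in_conv)
  with closed show False by blast
qed

lemma local_iso_edge_continues:
  assumes "local_iso E cv ce j i" and "compatible V E cv ce" and "(j, i) \<in> E"
  shows "\<exists>k. (i, k) \<in> E \<and> cv k = cv i"
proof -
  obtain f where
    edges: "\<forall>a\<in>local_vertices E j. \<forall>b\<in>local_vertices E j.
              (a, b) \<in> local_edges E j \<longleftrightarrow> (f a, f b) \<in> local_edges E i"
    and edge_colors: "\<forall>a b. (a, b) \<in> local_edges E j \<longrightarrow> ce (f a, f b) = ce (a, b)"
    using assms(1) unfolding local_iso_def colored_iso_def by blast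
  have ji_local: "(j, i) \<in> local_edges E j"
    using assms(3) by (simp add: local_edges_def children_def)
  have "j \<in> local_vertices E j" "i \<in> local_vertices E j"
    using assms(3) by (auto simp: local_vertices_def children_def)
  with edges ji_local have "(f j, f i) \<in> local_edges E i" by blast
  hence "f j = i" and ik: "(i, f i) \<in> E"
    by (auto simp: local_edges_def children_def)
  with edge_colors ji_local have "ce (i, f i) = ce (j, i)" by force
  with assms(2,3) ik have "cv (f i) = cv i"
    unfolding compatible_def by metis
  with ik show ?thesis by blast
qed

theorem lemma7p13:
  fixes V :: "'v set" and E :: "('v \<times> 'v) set"
    and cv :: "'v \<Rightarrow> nat" and ce :: "'v \<times> 'v \<Rightarrow> nat" and r R :: nat
  assumes "is_dag V E"
    and "coloring (r + R) V E cv ce"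
    and "compatible V E cv ce"
    and "\<forall>i\<in>V. \<forall>j\<in>V. cv i = cv j \<longrightarrow> local_iso E cv ce i j"
  shows "\<not> (\<exists>j i. (j, i) \<in> E \<and> cv i = cv j)"
proof -
  have "E \<subseteq> V \<times> V" and "finite V" and "acyclic E"
    using assms(1) by (auto simp: is_dag_def)
  hence "finite E" by (meson finite_SigmaI finite_subset)
  let ?S = "{i. \<exists>j. (j, i) \<in> E \<and> cv i = cv j}"
  have "\<exists>k\<in>?S. (i, k) \<in> E" if "i \<in> ?S" for i
  proof -
    from that obtain j where ji: "(j, i) \<in> E" "cv i = cv j" by blast
    with \<open>E \<subseteq> V \<times> V\<close> have "j \<in> V" "i \<in> V" by blast+
    with assms(4) ji(2) have "local_iso E cv ce j i" by simp
    then obtain k where "(i, k) \<in> E" "cv k = cv i"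
      using local_iso_edge_continues[OF _ assms(3) ji(1)] by blast
    thus ?thesis by blast
  qed
  with \<open>finite E\<close> \<open>acyclic E\<close> have "?S = {}"
    by (rule finite_acyclic_successor_closed_empty)
  thus ?thesis by blast
qed

end
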